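(* Let $\mathcal A=\mathcal A(\Sigma)$ be a cluster algebra, $H\le\mathrm{Aut}\,\mathcal A$, and let $\mathcal A(\Sigma_1)$ be maximal (under inclusion) among cluster subalgebras of $\mathcal A$ contained in $\mathcal A^H$. Put $H'=\mathrm{Gal}_{\Sigma_1}\mathcal A$. Then $\mathcal A(\Sigma_1)\in\mathcal M^{H'}_{sub}$; i.e. $\mathcal A(\Sigma_1)\subseteq\mathcal A^{H'}\subseteq\mathcal A$ is a Galois-like extension.
   Context: $\mathrm{Aut}\,\mathcal A$: group of cluster automorphisms. Cluster subalgebras $\mathcal A(\Sigma')$ arise from mixing-type sub-seeds of seeds of $\mathcal A$. $\mathrm{Gal}_{\Sigma'}\mathcal A=\{f\in\mathrm{Aut}\,\mathcal A: f|_{\mathcal A(\Sigma')}=\mathrm{id}\}$; $\mathcal A^H=\{z\in\mathcal A: f(z)=z\ \forall f\in H\}$; $\mathcal M^H_{sub}$ is the set of cluster subalgebras $\mathcal A(\Sigma')$ maximal (under inclusion) among cluster subalgebras contained in $\mathcal A^H$ and satisfying $\mathrm{Gal}_{\Sigma'}\mathcal A=H$. *)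

theory Defs
  imports "HOL-Algebra.Group"
begin

text \<open>A seed consists of a finite set of exchangeable indices, a finite set of frozen
indices (disjoint), the extended cluster (a family of elements of the ambient field
indexed by these indices) and the integer exchange matrix B = (b_ij), with i ranging over
all indices and j over the exchangeable ones.\<close>

record 'a seed =
  s_exch :: "nat set"
  s_froz :: "nat set"
  s_var  :: "nat \<Rightarrow> 'a"
  s_mat  :: "nat \<Rightarrow> nat \<Rightarrow> int"

definition s_ind :: "'a seed \<Rightarrow> nat set" where
  "s_ind S = s_exch S \<union> s_froz S"

text \<open>A polynomial is given by its finitely supported coefficient function on exponent vectors.\<close>

definition alg_indep :: "nat set \<Rightarrow> (nat \<Rightarrow> 'a::field) \<Rightarrow> bool" where
  "alg_indep E x \<longleftrightarrow>
     (\<forall>c :: (nat \<Rightarrow> nat) \<Rightarrow> int.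
        finite {e. c e \<noteq> 0} \<and> (\<forall>e. c e \<noteq> 0 \<longrightarrow> (\<forall>i. i \<notin> E \<longrightarrow> e i = 0)) \<and>
        (\<Sum>e\<in>{e. c e \<noteq> 0}. of_int (c e) * (\<Prod>i\<in>E. x i ^ e i)) = 0
        \<longrightarrow> (\<forall>e. c e = 0))"

definition skew_symmetrizable :: "nat set \<Rightarrow> (nat \<Rightarrow> nat \<Rightarrow> int) \<Rightarrow> bool" where
  "skew_symmetrizable I B \<longleftrightarrow>
     (\<exists>d :: nat \<Rightarrow> int. (\<forall>i\<in>I. d i > 0) \<and> (\<forall>i\<in>I. \<forall>j\<in>I. d i * B i j = - (d j * B j i)))"

definition valid_seed :: "'a::field seed \<Rightarrow> bool" where
  "valid_seed S \<longleftrightarrow>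
     finite (s_exch S) \<and> finite (s_froz S) \<and> s_exch S \<inter> s_froz S = {} \<and>
     inj_on (s_var S) (s_ind S) \<and> alg_indep (s_ind S) (s_var S) \<and>
     skew_symmetrizable (s_exch S) (s_mat S)"

text \<open>Seed mutation in direction k (exchange relation x_k x_k' = prod x_i^[b_ik]_+ + prod x_i^[-b_ik]_+,
and Fomin-Zelevinsky matrix mutation).\<close>

definition mutate :: "nat \<Rightarrow> 'a::field seed \<Rightarrow> 'a seed" where
  "mutate k S =
     S\<lparr> s_var := (s_var S)(k :=
            ((\<Prod>i\<in>s_ind S. s_var S i ^ nat (max (s_mat S i k) 0)) +
             (\<Prod>i\<in>s_ind S. s_var S i ^ nat (max (- s_mat S i k) 0))) / s_var S k),
        s_mat := (\<lambda>i j. if i = k \<or> j = k then - s_mat S i j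
                        else s_mat S i j + max (s_mat S i k) 0 * max (s_mat S k j) 0
                                         - max (- s_mat S i k) 0 * max (- s_mat S k j) 0) \<rparr>"

definition mut_step :: "'a::field seed \<Rightarrow> 'a seed \<Rightarrow> bool" where
  "mut_step S T \<longleftrightarrow> (\<exists>k\<in>s_exch S. T = mutate k S)"

definition seed_of :: "'a::field seed \<Rightarrow> 'a seed \<Rightarrow> bool" where
  "seed_of \<Sigma> S \<longleftrightarrow> mut_step\<^sup>*\<^sup>* \<Sigma> S"

definition cluster_vars :: "'a::field seed \<Rightarrow> 'a set" where
  "cluster_vars \<Sigma> = {s_var S i | S i. seed_of \<Sigma> S \<and> i \<in> s_exch S}"

definition frozen_vars :: "'a::field seed \<Rightarrow> 'a set" where
  "frozen_vars \<Sigma> = s_var \<Sigma> ` s_froz \<Sigma>"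

inductive_set gen_ring :: "'a::comm_ring_1 set \<Rightarrow> 'a set" for G where
  gen: "a \<in> G \<Longrightarrow> a \<in> gen_ring G"
| one: "1 \<in> gen_ring G"
| add: "a \<in> gen_ring G \<Longrightarrow> b \<in> gen_ring G \<Longrightarrow> a + b \<in> gen_ring G"
| neg: "a \<in> gen_ring G \<Longrightarrow> - a \<in> gen_ring G"
| mult: "a \<in> gen_ring G \<Longrightarrow> b \<in> gen_ring G \<Longrightarrow> a * b \<in> gen_ring G"

text \<open>The cluster algebra A(Sigma): the ZP-subalgebra of the ambient field generated by all
cluster variables, with ground ring ZP = Z[x_fr^{+-1}].\<close>

definition cluster_alg :: "'a::field seed \<Rightarrow> 'a set" where
  "cluster_alg \<Sigma> = gen_ring (cluster_vars \<Sigma> \<union> frozen_vars \<Sigma> \<union> inverse ` frozen_vars \<Sigma>)"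

text \<open>Automorphisms are represented by functions on
the ambient field that are the identity outside A, so that they are uniquely determined.\<close>

definition cluster_aut :: "'a::field seed \<Rightarrow> ('a \<Rightarrow> 'a) \<Rightarrow> bool" where
  "cluster_aut \<Sigma> f \<longleftrightarrow>
     bij_betw f (cluster_alg \<Sigma>) (cluster_alg \<Sigma>) \<and>
     (\<forall>z. z \<notin> cluster_alg \<Sigma> \<longrightarrow> f z = z) \<and>
     (\<forall>a\<in>cluster_alg \<Sigma>. \<forall>b\<in>cluster_alg \<Sigma>. f (a + b) = f a + f b \<and> f (a * b) = f a * f b) \<and>
     f 1 = 1 \<and>
     (\<exists>S S' \<sigma>. seed_of \<Sigma> S \<and> seed_of \<Sigma> S' \<and>
        bij_betw \<sigma> (s_exch S) (s_exch S') \<and> bij_betw \<sigma> (s_froz S) (s_froz S') \<and>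
        (\<forall>i\<in>s_ind S. f (s_var S i) = s_var S' (\<sigma> i)) \<and>
        (\<forall>k\<in>s_exch S. f (s_var (mutate k S) k) = s_var (mutate (\<sigma> k) S') (\<sigma> k)))"

definition Aut :: "'a::field seed \<Rightarrow> ('a \<Rightarrow> 'a) set" where
  "Aut \<Sigma> = {f. cluster_aut \<Sigma> f}"

definition aut_group :: "'a::field seed \<Rightarrow> ('a \<Rightarrow> 'a) monoid" where
  "aut_group \<Sigma> = \<lparr> carrier = Aut \<Sigma>, mult = (\<circ>), one = id \<rparr>"

definition mixing_subseed :: "'a::field seed \<Rightarrow> 'a seed \<Rightarrow> bool" where
  "mixing_subseed S S' \<longleftrightarrow>
     (\<exists>I0 I1. I0 \<subseteq> s_ind S \<and> I1 \<subseteq> s_exch S \<and> I0 \<inter> I1 = {} \<and>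
        s_exch S' = s_exch S - I0 - I1 \<and>
        s_froz S' = (s_froz S \<union> I1) - I0 \<and>
        (\<forall>i\<in>s_ind S'. s_var S' i = s_var S i) \<and>
        (\<forall>i\<in>s_ind S'. \<forall>j\<in>s_exch S'. s_mat S' i j = s_mat S i j))"

definition cluster_subalg :: "'a::field seed \<Rightarrow> 'a seed \<Rightarrow> bool" where
  "cluster_subalg \<Sigma> \<Sigma>' \<longleftrightarrow>
     (\<exists>S. seed_of \<Sigma> S \<and> mixing_subseed S \<Sigma>') \<and> cluster_alg \<Sigma>' \<subseteq> cluster_alg \<Sigma>"

definition Gal :: "'a::field seed \<Rightarrow> 'a seed \<Rightarrow> ('a \<Rightarrow> 'a) set" where
  "Gal \<Sigma> \<Sigma>' = {f \<in> Aut \<Sigma>. \<forall>z\<in>cluster_alg \<Sigma>'. f z = z}"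

definition fixed_alg :: "'a::field seed \<Rightarrow> ('a \<Rightarrow> 'a) set \<Rightarrow> 'a set" where
  "fixed_alg \<Sigma> H = {z \<in> cluster_alg \<Sigma>. \<forall>f\<in>H. f z = z}"

definition M_sub :: "'a::field seed \<Rightarrow> ('a \<Rightarrow> 'a) set \<Rightarrow> 'a set set" where
  "M_sub \<Sigma> H = {cluster_alg \<Sigma>' | \<Sigma>'.
      cluster_subalg \<Sigma> \<Sigma>' \<and> cluster_alg \<Sigma>' \<subseteq> fixed_alg \<Sigma> H \<and> Gal \<Sigma> \<Sigma>' = H \<and>
      (\<forall>\<Sigma>2. cluster_subalg \<Sigma> \<Sigma>2 \<and> cluster_alg \<Sigma>2 \<subseteq> fixed_alg \<Sigma> H \<and> Gal \<Sigma> \<Sigma>2 = H \<and>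
             cluster_alg \<Sigma>' \<subseteq> cluster_alg \<Sigma>2 \<longrightarrow> cluster_alg \<Sigma>2 = cluster_alg \<Sigma>')}"

end

theory Submission
  imports Defs
begin

text \<open>Gal and fixed_alg form an antitone Galois connection between subsets of Aut A and
subsets of A. Hence H \<subseteq> H' = Gal(A(\<Sigma>1)), so A^H' \<subseteq> A^H, and any competitor for
membership in M^H'_sub also lies in A^H, where A(\<Sigma>1) is already maximal.\<close>

lemma subgroup_aut_group_subset_Aut:
  "subgroup H (aut_group \<Sigma>) \<Longrightarrow> H \<subseteq> Aut \<Sigma>"
  using subgroup.subset by (fastforce simp: aut_group_def)

lemma fixed_alg_antimono:
  "H \<subseteq> K \<Longrightarrow> fixed_alg \<Sigma> K \<subseteq> fixed_alg \<Sigma> H"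
  by (auto simp: fixed_alg_def)

lemma subset_Gal_iff_subset_fixed_alg:
  assumes "H \<subseteq> Aut \<Sigma>" and "cluster_alg \<Sigma>' \<subseteq> cluster_alg \<Sigma>"
  shows "H \<subseteq> Gal \<Sigma> \<Sigma>' \<longleftrightarrow> cluster_alg \<Sigma>' \<subseteq> fixed_alg \<Sigma> H"
  using assms by (auto simp: Gal_def fixed_alg_def)

lemma cluster_alg_subset_fixed_alg_Gal:
  assumes "cluster_alg \<Sigma>' \<subseteq> cluster_alg \<Sigma>"
  shows "cluster_alg \<Sigma>' \<subseteq> fixed_alg \<Sigma> (Gal \<Sigma> \<Sigma>')"
  using assms by (auto simp: Gal_def fixed_alg_def)

theorem mainTheorem13:
  fixes \<Sigma> \<Sigma>1 :: "'a::field seed" and H :: "('a \<Rightarrow> 'a) set"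
  assumes "valid_seed \<Sigma>"
    and "subgroup H (aut_group \<Sigma>)"
    and "cluster_subalg \<Sigma> \<Sigma>1"
    and "cluster_alg \<Sigma>1 \<subseteq> fixed_alg \<Sigma> H"
    and "\<forall>\<Sigma>2. cluster_subalg \<Sigma> \<Sigma>2 \<and> cluster_alg \<Sigma>2 \<subseteq> fixed_alg \<Sigma> H \<and>
              cluster_alg \<Sigma>1 \<subseteq> cluster_alg \<Sigma>2 \<longrightarrow> cluster_alg \<Sigma>2 = cluster_alg \<Sigma>1"
  shows "cluster_alg \<Sigma>1 \<in> M_sub \<Sigma> (Gal \<Sigma> \<Sigma>1)"
proof -
  have in_A: "cluster_alg \<Sigma>1 \<subseteq> cluster_alg \<Sigma>"
    using assms(3) by (simp add: cluster_subalg_def)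
  have "H \<subseteq> Gal \<Sigma> \<Sigma>1"
    using subset_Gal_iff_subset_fixed_alg[OF subgroup_aut_group_subset_Aut[OF assms(2)] in_A]
      assms(4) by blast
  then have fixed_Gal_le_fixed_H: "fixed_alg \<Sigma> (Gal \<Sigma> \<Sigma>1) \<subseteq> fixed_alg \<Sigma> H"
    by (rule fixed_alg_antimono)
  have maximal: "cluster_alg \<Sigma>2 = cluster_alg \<Sigma>1"
    if "cluster_subalg \<Sigma> \<Sigma>2" "cluster_alg \<Sigma>2 \<subseteq> fixed_alg \<Sigma> (Gal \<Sigma> \<Sigma>1)"
      "cluster_alg \<Sigma>1 \<subseteq> cluster_alg \<Sigma>2" for \<Sigma>2
    using that fixed_Gal_le_fixed_H assms(5) by blast
  show ?thesis
    unfolding M_sub_def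
    using assms(3) cluster_alg_subset_fixed_alg_Gal[OF in_A] maximal by blast
qed

end
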